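(* For every NFA $\mathcal A$, the relation $P(\sqsubset^{\mathrm{bw}},\subseteq^{\mathrm{fw}})$ is good for pruning on NFA: $\mathcal L(\mathrm{Prune}(\mathcal A,P(\sqsubset^{\mathrm{bw}},\subseteq^{\mathrm{fw}})))=\mathcal L(\mathcal A)$.
   Context: An NFA is $\mathcal A=(\Sigma,Q,I,F,\delta)$, $\delta\subseteq Q\times\Sigma\times Q$, assumed forward and backward complete (every state has, for every symbol, an incoming and an outgoing transition with that symbol); its language is the set of finite words having a finite trace starting in $I$ and ending in $F$. Backward finite-word simulation $\sqsubseteq^{\mathrm{bw}}$: in the game from $(p_0,q_0)$, at round $i$ from $(p_i,q_i)$ Spoiler picks $p_{i+1}\xrightarrow{\sigma_i}p_i$ and Duplicator answers $q_{i+1}\xrightarrow{\sigma_i}q_i$; Duplicator wins the infinite play if $p_i\in I\Rightarrow q_i\in I$ for all $i$; $p\sqsubseteq^{\mathrm{bw}}q$ iff she has a winning strategy; $\sqsubset^{\mathrm{bw}}$ is its strict part. Forward finite trace inclusion: $p\subseteq^{\mathrm{fw}}q$ iff for every finite word $w$, if some $w$-trace from $p$ ends in $F$ then some $w$-trace from $q$ ends in $F$. $\mathrm{Prune}(\mathcal A,P)$ has transition set $\{t\in\delta:\nexists t'\in\delta,(t,t')\in P\}$; $P(R_b,R_f)=\{((p,\sigma,r),(p',\sigma,r'))\in\delta\times\delta:p\,R_b\,p',\ r\,R_f\,r'\}$. *)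

theory Defs
  imports Main
begin

definition nfa :: "'a set \<Rightarrow> 'q set \<Rightarrow> 'q set \<Rightarrow> 'q set \<Rightarrow> ('q \<times> 'a \<times> 'q) set \<Rightarrow> bool" where
  "nfa \<Sigma> Q I F \<delta> \<longleftrightarrow> finite \<Sigma> \<and> finite Q \<and> I \<subseteq> Q \<and> F \<subseteq> Q \<and> \<delta> \<subseteq> Q \<times> \<Sigma> \<times> Q"

definition complete_nfa :: "'a set \<Rightarrow> 'q set \<Rightarrow> ('q \<times> 'a \<times> 'q) set \<Rightarrow> bool" where
  "complete_nfa \<Sigma> Q \<delta> \<longleftrightarrow>
     (\<forall>q\<in>Q. \<forall>a\<in>\<Sigma>. (\<exists>r. (q, a, r) \<in> \<delta>) \<and> (\<exists>p. (p, a, q) \<in> \<delta>))"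

fun path :: "('q \<times> 'a \<times> 'q) set \<Rightarrow> 'q \<Rightarrow> 'a list \<Rightarrow> 'q \<Rightarrow> bool" where
  "path \<delta> p [] r \<longleftrightarrow> p = r"
| "path \<delta> p (a # w) r \<longleftrightarrow> (\<exists>p'. (p, a, p') \<in> \<delta> \<and> path \<delta> p' w r)"

definition lang :: "'a set \<Rightarrow> 'q set \<Rightarrow> 'q set \<Rightarrow> ('q \<times> 'a \<times> 'q) set \<Rightarrow> 'a list set" where
  "lang \<Sigma> I F \<delta> = {w \<in> lists \<Sigma>. \<exists>p\<in>I. \<exists>r\<in>F. path \<delta> p w r}"

text \<open>A Duplicator strategy maps the history of positions
  (p_0,q_0),...,(p_i,q_i) together with Spoiler's move (p_{i+1}, sigma_i) to q_{i+1}.\<close>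
fun bw_hist :: "(('q \<times> 'q) list \<Rightarrow> 'q \<Rightarrow> 'a \<Rightarrow> 'q) \<Rightarrow> 'q \<Rightarrow> 'q \<Rightarrow> (nat \<Rightarrow> 'q) \<Rightarrow> (nat \<Rightarrow> 'a)
    \<Rightarrow> nat \<Rightarrow> ('q \<times> 'q) list" where
  "bw_hist S p0 q0 ps \<sigma>s 0 = [(p0, q0)]"
| "bw_hist S p0 q0 ps \<sigma>s (Suc i) =
     bw_hist S p0 q0 ps \<sigma>s i @ [(ps (Suc i), S (bw_hist S p0 q0 ps \<sigma>s i) (ps (Suc i)) (\<sigma>s i))]"

definition bw_dup_pos :: "(('q \<times> 'q) list \<Rightarrow> 'q \<Rightarrow> 'a \<Rightarrow> 'q) \<Rightarrow> 'q \<Rightarrow> 'q \<Rightarrow> (nat \<Rightarrow> 'q) \<Rightarrow> (nat \<Rightarrow> 'a)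
    \<Rightarrow> nat \<Rightarrow> 'q" where
  "bw_dup_pos S p0 q0 ps \<sigma>s i = snd (last (bw_hist S p0 q0 ps \<sigma>s i))"

definition bw_winning :: "('q \<times> 'a \<times> 'q) set \<Rightarrow> 'q set \<Rightarrow> (('q \<times> 'q) list \<Rightarrow> 'q \<Rightarrow> 'a \<Rightarrow> 'q)
    \<Rightarrow> 'q \<Rightarrow> 'q \<Rightarrow> bool" where
  "bw_winning \<delta> I S p0 q0 \<longleftrightarrow>
     (\<forall>ps \<sigma>s. ps 0 = p0 \<and> (\<forall>i. (ps (Suc i), \<sigma>s i, ps i) \<in> \<delta>) \<longrightarrow>
        (\<forall>i. (bw_dup_pos S p0 q0 ps \<sigma>s (Suc i), \<sigma>s i, bw_dup_pos S p0 q0 ps \<sigma>s i) \<in> \<delta>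
             \<and> (ps i \<in> I \<longrightarrow> bw_dup_pos S p0 q0 ps \<sigma>s i \<in> I)))"

definition bw_sim :: "('q \<times> 'a \<times> 'q) set \<Rightarrow> 'q set \<Rightarrow> 'q \<Rightarrow> 'q \<Rightarrow> bool" where
  "bw_sim \<delta> I p q \<longleftrightarrow> (\<exists>S. bw_winning \<delta> I S p q)"

definition bw_sim_strict :: "('q \<times> 'a \<times> 'q) set \<Rightarrow> 'q set \<Rightarrow> 'q \<Rightarrow> 'q \<Rightarrow> bool" where
  "bw_sim_strict \<delta> I p q \<longleftrightarrow> bw_sim \<delta> I p q \<and> \<not> bw_sim \<delta> I q p"

definition fw_incl :: "('q \<times> 'a \<times> 'q) set \<Rightarrow> 'q set \<Rightarrow> 'q \<Rightarrow> 'q \<Rightarrow> bool" where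
  "fw_incl \<delta> F p q \<longleftrightarrow>
     (\<forall>w. (\<exists>r\<in>F. path \<delta> p w r) \<longrightarrow> (\<exists>r\<in>F. path \<delta> q w r))"

definition prune_rel :: "('q \<Rightarrow> 'q \<Rightarrow> bool) \<Rightarrow> ('q \<Rightarrow> 'q \<Rightarrow> bool) \<Rightarrow> ('q \<times> 'a \<times> 'q) set
    \<Rightarrow> (('q \<times> 'a \<times> 'q) \<times> ('q \<times> 'a \<times> 'q)) set" where
  "prune_rel Rb Rf \<delta> = {((p, a, r), (p', a', r')). (p, a, r) \<in> \<delta> \<and> (p', a', r') \<in> \<delta> \<and>
       a' = a \<and> Rb p p' \<and> Rf r r'}"

definition prune :: "('q \<times> 'a \<times> 'q) set \<Rightarrow> (('q \<times> 'a \<times> 'q) \<times> ('q \<times> 'a \<times> 'q)) set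
    \<Rightarrow> ('q \<times> 'a \<times> 'q) set" where
  "prune \<delta> P = {t \<in> \<delta>. \<not> (\<exists>t'\<in>\<delta>. (t, t') \<in> P)}"

end

theory Submission
  imports Defs
begin

(*
  Rank every state by the number of states strictly above it in backward simulation.  Among the
  accepting traces of a word pick one whose sequence of ranks is lexicographically minimal.  If it
  used a pruned transition (p, a, r), dominated by (p', a, r') with p strictly bw-below p' and r
  forward-trace-included in r', then the simulation lifts the prefix ending in p to a prefix from an
  initial state ending in p' that is pointwise bw-above it, and trace inclusion supplies an
  accepting continuation from r'.  Ranks decrease along the bw-order, strictly at p, so the new
  trace has a lexicographically smaller rank sequence: a contradiction.  Completeness is used only
  backwards: every state has a predecessor, so Spoiler always has a move and a winning strategy
  must answer every move.
*)

lemma path_iff_trace: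
  "path \<delta> p w r \<longleftrightarrow>
     (\<exists>qs. qs 0 = p \<and> qs (length w) = r \<and> (\<forall>j<length w. (qs j, w!j, qs (Suc j)) \<in> \<delta>))"
proof (induction w arbitrary: p)
  case Nil
  then show ?case by auto
next
  case (Cons a w)
  have "path \<delta> p (a # w) r \<longleftrightarrow> (\<exists>qs. (p, a, qs 0) \<in> \<delta> \<and> qs (length w) = r
          \<and> (\<forall>j<length w. (qs j, w!j, qs (Suc j)) \<in> \<delta>))"
    using Cons.IH by auto
  also have "\<dots> \<longleftrightarrow> (\<exists>qs. qs 0 = p \<and> qs (length (a # w)) = r
          \<and> (\<forall>j<length (a # w). (qs j, (a # w)!j, qs (Suc j)) \<in> \<delta>))"
  proof
    assume "\<exists>qs. (p, a, qs 0) \<in> \<delta> \<and> qs (length w) = r \<and> (\<forall>j<length w. (qs j, w!j, qs (Suc j)) \<in> \<delta>)"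
    then obtain qs where "(p, a, qs 0) \<in> \<delta>" "qs (length w) = r"
      "\<forall>j<length w. (qs j, w!j, qs (Suc j)) \<in> \<delta>" by blast
    then show "\<exists>qs. qs 0 = p \<and> qs (length (a # w)) = r
          \<and> (\<forall>j<length (a # w). (qs j, (a # w)!j, qs (Suc j)) \<in> \<delta>)"
      by (intro exI[of _ "case_nat p qs"]) (auto simp: less_Suc_eq_0_disj)
  next
    assume "\<exists>qs. qs 0 = p \<and> qs (length (a # w)) = r
          \<and> (\<forall>j<length (a # w). (qs j, (a # w)!j, qs (Suc j)) \<in> \<delta>)"
    then obtain qs where "qs 0 = p" "qs (Suc (length w)) = r"
      "\<forall>j<Suc (length w). (qs j, (a # w)!j, qs (Suc j)) \<in> \<delta>" by auto
    then show "\<exists>qs. (p, a, qs 0) \<in> \<delta> \<and> qs (length w) = r \<and> (\<forall>j<length w. (qs j, w!j, qs (Suc j)) \<in> \<delta>)"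
      by (intro exI[of _ "\<lambda>j. qs (Suc j)"]) auto
  qed
  finally show ?case .
qed

lemma path_mono: "\<delta> \<subseteq> \<delta>' \<Longrightarrow> path \<delta> p w r \<Longrightarrow> path \<delta>' p w r"
  by (induction w arbitrary: p) auto

definition accepting_trace :: "('q \<times> 'a \<times> 'q) set \<Rightarrow> 'q set \<Rightarrow> 'q set \<Rightarrow> 'a list \<Rightarrow> (nat \<Rightarrow> 'q) \<Rightarrow> bool"
  where "accepting_trace \<delta> I F w qs \<longleftrightarrow>
    qs 0 \<in> I \<and> qs (length w) \<in> F \<and> (\<forall>j<length w. (qs j, w!j, qs (Suc j)) \<in> \<delta>)"

lemma lang_iff_accepting_trace:
  "w \<in> lang \<Sigma> I F \<delta> \<longleftrightarrow> w \<in> lists \<Sigma> \<and> (\<exists>qs. accepting_trace \<delta> I F w qs)"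
  unfolding lang_def accepting_trace_def path_iff_trace by blast

lemma path_drop_trace:
  assumes "\<forall>j<length w. (qs j, w!j, qs (Suc j)) \<in> \<delta>" and "k \<le> length w"
  shows "path \<delta> (qs k) (drop k w) (qs (length w))"
  unfolding path_iff_trace using assms by (intro exI[of _ "\<lambda>j. qs (k + j)"]) auto

lemma trace_append_path:
  assumes ss: "\<forall>j<k. (ss j, w!j, ss (Suc j)) \<in> \<delta>" and "k \<le> length w"
    and "path \<delta> (ss k) (drop k w) r"
  shows "\<exists>qs. (\<forall>j\<le>k. qs j = ss j) \<and> qs (length w) = r \<and> (\<forall>j<length w. (qs j, w!j, qs (Suc j)) \<in> \<delta>)"
proof -
  obtain ts where ts: "ts 0 = ss k" "ts (length w - k) = r"
    "\<forall>j<length w - k. (ts j, w!(k + j), ts (Suc j)) \<in> \<delta>"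
    using assms(3) \<open>k \<le> length w\<close> unfolding path_iff_trace by auto
  define qs where "qs j = (if j \<le> k then ss j else ts (j - k))" for j
  have "(qs j, w!j, qs (Suc j)) \<in> \<delta>" if "j < length w" for j
  proof (cases "j < k")
    case True
    then show ?thesis using ss by (simp add: qs_def)
  next
    case False
    then have "(ts (j - k), w!(k + (j - k)), ts (Suc (j - k))) \<in> \<delta>"
      using ts(3) that by (metis diff_less_mono not_less)
    then show ?thesis using False ts(1) by (auto simp: qs_def Suc_diff_le)
  qed
  then show ?thesis using ts(1,2) \<open>k \<le> length w\<close> by (intro exI[of _ qs]) (auto simp: qs_def)
qed

lemma lang_mono: "\<delta> \<subseteq> \<delta>' \<Longrightarrow> lang \<Sigma> I F \<delta> \<subseteq> lang \<Sigma> I F \<delta>'"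
  unfolding lang_def by (auto intro: path_mono)

lemma lex_less_than_if_le_until_less:
  fixes xs ys :: "nat list"
  assumes "length xs = length ys" "i < length ys" "\<forall>j<i. xs!j \<le> ys!j" "xs!i < ys!i"
  shows "(xs, ys) \<in> lex less_than"
  using assms
proof (induction ys arbitrary: xs i)
  case Nil
  then show ?case by simp
next
  case (Cons y ys)
  then obtain x xs' where xs: "xs = x # xs'" by (cases xs) auto
  show ?case
  proof (cases "i = 0 \<or> x < y")
    case True
    then show ?thesis using Cons.prems xs by auto
  next
    case False
    then obtain k where k: "i = Suc k" and "x = y" using Cons.prems(3) xs not0_implies_Suc by fastforce
    moreover have "\<forall>j<k. xs'!j \<le> ys!j"
      using Cons.prems(3) xs k by (metis Suc_mono nth_Cons_Suc)
    then have "(xs', ys) \<in> lex less_than"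
      using Cons.IH[of xs' k] Cons.prems xs k by simp
    ultimately show ?thesis using xs by simp
  qed
qed

lemma bw_hist_Cons:
  "bw_hist S p q (case_nat p ps) (case_nat a \<sigma>s) (Suc i)
     = (p, q) # bw_hist (\<lambda>h. S ((p, q) # h)) (ps 0) (S [(p, q)] (ps 0) a) ps \<sigma>s i"
  by (induction i) simp_all

lemma bw_dup_pos_Cons:
  "bw_dup_pos S p q (case_nat p ps) (case_nat a \<sigma>s) (Suc i)
     = bw_dup_pos (\<lambda>h. S ((p, q) # h)) (ps 0) (S [(p, q)] (ps 0) a) ps \<sigma>s i"
proof -
  have "bw_hist S' p' q' ps \<sigma>s i \<noteq> []" for S' p' q'
    by (cases i) simp_all
  then show ?thesis unfolding bw_dup_pos_def bw_hist_Cons by simp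
qed

locale backward_total =
  fixes Q :: "'q set" and \<delta> :: "('q \<times> 'a \<times> 'q) set"
  assumes transitions_in_states: "\<delta> \<subseteq> Q \<times> UNIV \<times> Q"
    and has_predecessor: "q \<in> Q \<Longrightarrow> \<exists>p a. (p, a, q) \<in> \<delta>"
begin

lemma source_in_states: "(p, a, q) \<in> \<delta> \<Longrightarrow> p \<in> Q"
  using transitions_in_states by auto

lemma backward_play_exists: "q \<in> Q \<Longrightarrow> \<exists>ps \<sigma>s. ps 0 = q \<and> (\<forall>i. (ps (Suc i), \<sigma>s i, ps i) \<in> \<delta>)"
proof -
  assume "q \<in> Q"
  define pred where "pred y = (SOME (x, a). (x, a, y) \<in> \<delta>)" for y
  have pred: "(fst (pred y), snd (pred y), y) \<in> \<delta>" if "y \<in> Q" for y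
  proof -
    have "\<exists>xa. case xa of (x, a) \<Rightarrow> (x, a, y) \<in> \<delta>" using has_predecessor[OF that] by auto
    from someI_ex[OF this] show ?thesis by (simp add: pred_def split: prod.splits)
  qed
  define ps where "ps i = ((fst \<circ> pred) ^^ i) q" for i
  have "ps i \<in> Q" for i
    by (induction i) (use \<open>q \<in> Q\<close> pred source_in_states in \<open>auto simp: ps_def\<close>)
  then show ?thesis
    using pred by (intro exI[of _ ps] exI[of _ "\<lambda>i. snd (pred (ps i))"]) (simp add: ps_def)
qed

lemma bw_winning_initial:
  assumes "bw_winning \<delta> I S p q" and "p \<in> Q" and "p \<in> I"
  shows "q \<in> I"
proof -
  obtain ps \<sigma>s where "ps 0 = p" "\<forall>i. (ps (Suc i), \<sigma>s i, ps i) \<in> \<delta>"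
    using backward_play_exists[OF \<open>p \<in> Q\<close>] by blast
  then show ?thesis
    using assms unfolding bw_winning_def by (force simp: bw_dup_pos_def)
qed

lemma bw_winning_Cons:
  assumes win: "bw_winning \<delta> I S p q" and tr: "(p', a, p) \<in> \<delta>"
  defines "q' \<equiv> S [(p, q)] p' a"
  shows "(q', a, q) \<in> \<delta>" and "bw_winning \<delta> I (\<lambda>h. S ((p, q) # h)) p' q'"
proof -
  have extended:
    "(bw_dup_pos S p q (case_nat p ps) (case_nat a \<sigma>s) (Suc i), case_nat a \<sigma>s i,
        bw_dup_pos S p q (case_nat p ps) (case_nat a \<sigma>s) i) \<in> \<delta>
      \<and> (case_nat p ps i \<in> I \<longrightarrow> bw_dup_pos S p q (case_nat p ps) (case_nat a \<sigma>s) i \<in> I)"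
    if "ps 0 = p'" "\<forall>i. (ps (Suc i), \<sigma>s i, ps i) \<in> \<delta>" for ps \<sigma>s i
  proof -
    have "(case_nat p ps (Suc i), case_nat a \<sigma>s i, case_nat p ps i) \<in> \<delta>" for i
      using that tr by (cases i) auto
    then show ?thesis using win unfolding bw_winning_def by simp
  qed
  obtain ps \<sigma>s where "ps 0 = p'" "\<forall>i. (ps (Suc i), \<sigma>s i, ps i) \<in> \<delta>"
    using backward_play_exists[OF source_in_states[OF tr]] by blast
  from extended[OF this, of 0] \<open>ps 0 = p'\<close>
  show "(q', a, q) \<in> \<delta>" by (simp add: bw_dup_pos_def q'_def)
  show "bw_winning \<delta> I (\<lambda>h. S ((p, q) # h)) p' q'"
    unfolding bw_winning_def
  proof (intro allI impI)
    fix ps \<sigma>s i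
    assume "ps 0 = p' \<and> (\<forall>i. (ps (Suc i), \<sigma>s i, ps i) \<in> \<delta>)"
    with extended[of ps \<sigma>s "Suc i"] bw_dup_pos_Cons[of S p q ps a \<sigma>s]
    show "(bw_dup_pos (\<lambda>h. S ((p, q) # h)) p' q' ps \<sigma>s (Suc i), \<sigma>s i,
          bw_dup_pos (\<lambda>h. S ((p, q) # h)) p' q' ps \<sigma>s i) \<in> \<delta>
        \<and> (ps i \<in> I \<longrightarrow> bw_dup_pos (\<lambda>h. S ((p, q) # h)) p' q' ps \<sigma>s i \<in> I)"
      by (simp add: q'_def)
  qed
qed

lemma bw_sim_initial: "bw_sim \<delta> I p q \<Longrightarrow> p \<in> Q \<Longrightarrow> p \<in> I \<Longrightarrow> q \<in> I"
  unfolding bw_sim_def using bw_winning_initial by blast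

lemma bw_sim_step:
  "bw_sim \<delta> I p q \<Longrightarrow> (p', a, p) \<in> \<delta> \<Longrightarrow> \<exists>q'. (q', a, q) \<in> \<delta> \<and> bw_sim \<delta> I p' q'"
  unfolding bw_sim_def using bw_winning_Cons by blast

text \<open>Duplicator keeps the play inside \<open>R\<close> by always answering with an \<open>R\<close>-related
  predecessor.\<close>

lemma bw_simI:
  assumes "R p q" and "p \<in> Q"
    and initial: "\<And>p q. R p q \<Longrightarrow> p \<in> Q \<Longrightarrow> p \<in> I \<Longrightarrow> q \<in> I"
    and step: "\<And>p q p' a. R p q \<Longrightarrow> p \<in> Q \<Longrightarrow> (p', a, p) \<in> \<delta> \<Longrightarrow> \<exists>q'. (q', a, q) \<in> \<delta> \<and> R p' q'"
  shows "bw_sim \<delta> I p q"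
proof -
  define S where "S h p' a = (SOME q'. (q', a, snd (last h)) \<in> \<delta> \<and> R p' q')"
    for h :: "('q \<times> 'q) list" and p' a
  have "bw_winning \<delta> I S p q"
    unfolding bw_winning_def
  proof (intro allI impI)
    fix ps \<sigma>s i
    assume play: "ps 0 = p \<and> (\<forall>i. (ps (Suc i), \<sigma>s i, ps i) \<in> \<delta>)"
    let ?dup = "bw_dup_pos S p q ps \<sigma>s"
    have answer: "(?dup (Suc k), \<sigma>s k, ?dup k) \<in> \<delta> \<and> R (ps (Suc k)) (?dup (Suc k))"
      if "ps k \<in> Q" "R (ps k) (?dup k)" for k
    proof -
      have "\<exists>q'. (q', \<sigma>s k, ?dup k) \<in> \<delta> \<and> R (ps (Suc k)) q'"
        using step[OF that(2,1)] play by blast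
      then show ?thesis
        unfolding S_def bw_dup_pos_def bw_hist.simps(2) last_snoc snd_conv by (rule someI_ex)
    qed
    have invariant: "ps k \<in> Q \<and> R (ps k) (?dup k)" for k
    proof (induction k)
      case 0
      then show ?case using play \<open>p \<in> Q\<close> \<open>R p q\<close> by (simp add: bw_dup_pos_def)
    next
      case (Suc k)
      then show ?case using answer play source_in_states by blast
    qed
    show "(?dup (Suc i), \<sigma>s i, ?dup i) \<in> \<delta> \<and> (ps i \<in> I \<longrightarrow> ?dup i \<in> I)"
      using answer invariant initial by blast
  qed
  then show ?thesis by (auto simp: bw_sim_def)
qed

lemma bw_sim_trans:
  assumes "bw_sim \<delta> I p q" "bw_sim \<delta> I q r" "p \<in> Q" "q \<in> Q"
  shows "bw_sim \<delta> I p r"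
proof (rule bw_simI[where R = "\<lambda>p r. \<exists>q\<in>Q. bw_sim \<delta> I p q \<and> bw_sim \<delta> I q r"])
  show "\<exists>q\<in>Q. bw_sim \<delta> I p q \<and> bw_sim \<delta> I q r" using assms by blast
  show "p \<in> Q" by fact
next
  fix p r assume "\<exists>q\<in>Q. bw_sim \<delta> I p q \<and> bw_sim \<delta> I q r" "p \<in> Q" "p \<in> I"
  then show "r \<in> I" using bw_sim_initial by blast
next
  fix p r p' a assume "\<exists>q\<in>Q. bw_sim \<delta> I p q \<and> bw_sim \<delta> I q r" "(p', a, p) \<in> \<delta>"
  then obtain q q' r' where "(q', a, q) \<in> \<delta>" "bw_sim \<delta> I p' q'" "(r', a, r) \<in> \<delta>" "bw_sim \<delta> I q' r'"
    using bw_sim_step by metis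
  then show "\<exists>r'. (r', a, r) \<in> \<delta> \<and> (\<exists>q\<in>Q. bw_sim \<delta> I p' q \<and> bw_sim \<delta> I q r')"
    using source_in_states by blast
qed

lemma bw_sim_strict_upper_mono:
  assumes "bw_sim \<delta> I p q" "p \<in> Q" "q \<in> Q"
  shows "{r \<in> Q. bw_sim_strict \<delta> I q r} \<subseteq> {r \<in> Q. bw_sim_strict \<delta> I p r}"
  using assms bw_sim_trans unfolding bw_sim_strict_def by blast

lemma bw_sim_lift_trace:
  assumes "\<forall>j<i. (qs j, \<sigma>s j, qs (Suc j)) \<in> \<delta>" "qs 0 \<in> I" "qs i \<in> Q" "bw_sim \<delta> I (qs i) p"
  shows "\<exists>ss. ss i = p \<and> ss 0 \<in> I \<and> (\<forall>j<i. (ss j, \<sigma>s j, ss (Suc j)) \<in> \<delta>)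
           \<and> (\<forall>j\<le>i. bw_sim \<delta> I (qs j) (ss j))"
  using assms
proof (induction i arbitrary: p)
  case 0
  then have "p \<in> I" using bw_sim_initial by blast
  then show ?case using 0 by (intro exI[of _ "\<lambda>_. p"]) simp
next
  case (Suc i)
  have tr: "(qs i, \<sigma>s i, qs (Suc i)) \<in> \<delta>" using Suc.prems(1) by simp
  obtain p0 where p0: "(p0, \<sigma>s i, p) \<in> \<delta>" "bw_sim \<delta> I (qs i) p0"
    using bw_sim_step[OF Suc.prems(4) tr] by blast
  obtain ss where ss: "ss i = p0" "ss 0 \<in> I" "\<forall>j<i. (ss j, \<sigma>s j, ss (Suc j)) \<in> \<delta>"
    "\<forall>j\<le>i. bw_sim \<delta> I (qs j) (ss j)"
    using Suc.IH[of p0] Suc.prems(1,2) source_in_states[OF tr] p0(2) by auto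
  show ?case
    using ss p0 Suc.prems(4)
    by (intro exI[of _ "ss(Suc i := p)"]) (auto simp: less_Suc_eq le_Suc_eq)
qed

lemma pruned_transition_improvable:
  assumes acc: "accepting_trace \<delta> I F w qs" and "i < length w"
    and pruned: "(qs i, w!i, qs (Suc i)) \<notin> prune \<delta> (prune_rel (bw_sim_strict \<delta> I) (fw_incl \<delta> F) \<delta>)"
  shows "\<exists>qs'. accepting_trace \<delta> I F w qs' \<and> (\<forall>j<i. bw_sim \<delta> I (qs j) (qs' j))
           \<and> bw_sim_strict \<delta> I (qs i) (qs' i)"
proof -
  have trace: "\<forall>j<length w. (qs j, w!j, qs (Suc j)) \<in> \<delta>" and "qs 0 \<in> I" "qs (length w) \<in> F"
    using acc by (auto simp: accepting_trace_def)
  then have tr: "(qs i, w!i, qs (Suc i)) \<in> \<delta>" using \<open>i < length w\<close> by blast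
  with pruned obtain p' r' where p'r': "(p', w!i, r') \<in> \<delta>"
    "bw_sim_strict \<delta> I (qs i) p'" "fw_incl \<delta> F (qs (Suc i)) r'"
    by (auto simp: prune_def prune_rel_def)
  obtain ss where ss: "ss i = p'" "ss 0 \<in> I" "\<forall>j<i. (ss j, w!j, ss (Suc j)) \<in> \<delta>"
    "\<forall>j\<le>i. bw_sim \<delta> I (qs j) (ss j)"
    using bw_sim_lift_trace[where I = I and i = i and qs = qs and \<sigma>s = "(!) w" and p = p']
      trace \<open>i < length w\<close> \<open>qs 0 \<in> I\<close> source_in_states[OF tr] p'r'(2) by (auto simp: bw_sim_strict_def)
  have "path \<delta> (qs (Suc i)) (drop (Suc i) w) (qs (length w))"
    using path_drop_trace[OF trace] \<open>i < length w\<close> by simp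
  then obtain r where "r \<in> F" "path \<delta> r' (drop (Suc i) w) r"
    using p'r'(3) \<open>qs (length w) \<in> F\<close> unfolding fw_incl_def by blast
  moreover have "\<forall>j<Suc i. ((ss(Suc i := r')) j, w!j, (ss(Suc i := r')) (Suc j)) \<in> \<delta>"
    using ss p'r'(1) by (auto simp: less_Suc_eq)
  ultimately obtain qs' where "\<forall>j\<le>Suc i. qs' j = (ss(Suc i := r')) j" "qs' (length w) = r"
    "\<forall>j<length w. (qs' j, w!j, qs' (Suc j)) \<in> \<delta>"
    using trace_append_path[of "Suc i" "ss(Suc i := r')" w \<delta> r] \<open>i < length w\<close> by auto
  then show ?thesis
    using ss p'r'(2) \<open>r \<in> F\<close> by (intro exI[of _ qs']) (auto simp: accepting_trace_def)
qed

end

definition bw_rank :: "('q \<times> 'a \<times> 'q) set \<Rightarrow> 'q set \<Rightarrow> 'q set \<Rightarrow> 'q \<Rightarrow> nat" where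
  "bw_rank \<delta> I Q p = card {q \<in> Q. bw_sim_strict \<delta> I p q}"

locale finite_backward_total = backward_total +
  assumes finite_states: "finite Q"
begin

lemma bw_rank_antimono:
  "bw_sim \<delta> I p q \<Longrightarrow> p \<in> Q \<Longrightarrow> q \<in> Q \<Longrightarrow> bw_rank \<delta> I Q q \<le> bw_rank \<delta> I Q p"
  unfolding bw_rank_def using bw_sim_strict_upper_mono finite_states by (simp add: card_mono)

lemma bw_rank_strict_antimono:
  assumes "bw_sim_strict \<delta> I p q" "p \<in> Q" "q \<in> Q"
  shows "bw_rank \<delta> I Q q < bw_rank \<delta> I Q p"
proof -
  have "{r \<in> Q. bw_sim_strict \<delta> I q r} \<subset> {r \<in> Q. bw_sim_strict \<delta> I p r}"
    using bw_sim_strict_upper_mono[where p = p and q = q] assms by (auto simp: bw_sim_strict_def)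
  then show ?thesis unfolding bw_rank_def by (simp add: psubset_card_mono finite_states)
qed

lemma rank_vector_lex_less:
  assumes "\<forall>j<i. bw_sim \<delta> I (qs j) (qs' j)" "bw_sim_strict \<delta> I (qs i) (qs' i)"
    and "\<forall>j\<le>i. qs j \<in> Q \<and> qs' j \<in> Q" "i \<le> n"
  shows "(map (bw_rank \<delta> I Q \<circ> qs') [0..<Suc n], map (bw_rank \<delta> I Q \<circ> qs) [0..<Suc n])
           \<in> lex less_than"
  using assms bw_rank_antimono bw_rank_strict_antimono
  by (intro lex_less_than_if_le_until_less[of _ _ i]) (simp_all del: upt_Suc)

lemma accepting_trace_prune:
  assumes "accepting_trace \<delta> I F w qs"
  shows "\<exists>qs. accepting_trace (prune \<delta> (prune_rel (bw_sim_strict \<delta> I) (fw_incl \<delta> F) \<delta>)) I F w qs"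
proof -
  let ?ranks = "\<lambda>qs. map (bw_rank \<delta> I Q \<circ> qs) [0..<Suc (length w)]"
  obtain qs where acc: "accepting_trace \<delta> I F w qs" and minimal:
    "\<And>qs'. (?ranks qs', ?ranks qs) \<in> lex less_than \<Longrightarrow> \<not> accepting_trace \<delta> I F w qs'"
    using wfE_min[OF wf_inv_image[OF wf_lex[OF wf_less_than]],
        of qs "{qs. accepting_trace \<delta> I F w qs}" ?ranks] assms by auto
  have "(qs i, w!i, qs (Suc i)) \<in> prune \<delta> (prune_rel (bw_sim_strict \<delta> I) (fw_incl \<delta> F) \<delta>)"
    if i: "i < length w" for i
  proof (rule ccontr)
    assume "(qs i, w!i, qs (Suc i)) \<notin> prune \<delta> (prune_rel (bw_sim_strict \<delta> I) (fw_incl \<delta> F) \<delta>)"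
    then obtain qs' where acc': "accepting_trace \<delta> I F w qs'" and
      "\<forall>j<i. bw_sim \<delta> I (qs j) (qs' j)" "bw_sim_strict \<delta> I (qs i) (qs' i)"
      using pruned_transition_improvable[OF acc i] by blast
    moreover have "\<forall>j\<le>i. qs j \<in> Q \<and> qs' j \<in> Q"
      using acc acc' \<open>i < length w\<close> source_in_states unfolding accepting_trace_def
      by (meson le_less_trans)
    ultimately show False
      using minimal rank_vector_lex_less[where i = i and qs = qs and qs' = qs' and n = "length w"]
        \<open>i < length w\<close> by simp
  qed
  then show ?thesis using acc by (auto simp: accepting_trace_def)
qed

end

theorem theorem5p8:
  fixes \<Sigma> :: "'a set" and Q I F :: "'q set" and \<delta> :: "('q \<times> 'a \<times> 'q) set"
  assumes "nfa \<Sigma> Q I F \<delta>"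
    and "complete_nfa \<Sigma> Q \<delta>"
  shows "lang \<Sigma> I F (prune \<delta> (prune_rel (bw_sim_strict \<delta> I) (fw_incl \<delta> F) \<delta>))
         = lang \<Sigma> I F \<delta>"
proof
  show "lang \<Sigma> I F (prune \<delta> (prune_rel (bw_sim_strict \<delta> I) (fw_incl \<delta> F) \<delta>)) \<subseteq> lang \<Sigma> I F \<delta>"
    by (rule lang_mono) (auto simp: prune_def)
  show "lang \<Sigma> I F \<delta> \<subseteq> lang \<Sigma> I F (prune \<delta> (prune_rel (bw_sim_strict \<delta> I) (fw_incl \<delta> F) \<delta>))"
  proof (cases "\<Sigma> = {}")
    case True
    then show ?thesis by (auto simp: lang_def)
  next
    case False
    interpret finite_backward_total Q \<delta>
      using assms False unfolding nfa_def complete_nfa_def by unfold_locales blast+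
    show ?thesis
      by (auto simp: lang_iff_accepting_trace dest: accepting_trace_prune)
  qed
qed

end
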